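(* Every ideal triangulation $T$ of $(S,V)$ admits a branching.
   Context: $S$ is a compact closed connected surface and $V\subset S$ is a finite set of $n$ marked points with $\chi(S)-n<0$. An ideal triangulation of $(S,V)$ is a possibly loose triangulation of $S$ (self- and multiple adjacencies allowed) with vertex set exactly $V$, i.e. obtained by gluing abstract triangles along abstract edges in pairs. A branching of $T$ is a choice of orientation of each edge such that, on every abstract triangle, the induced orientations of its three edges are induced by a total order of its vertices, each edge pointing towards the larger endpoint. Equivalently, it is a $\Delta$-complex structure on $T$. *)

theory Defs
  imports Main
begin

(* A combinatorial ideal triangulation: a finite set F of abstract triangles, each with
   corners 0,1,2.  A dart (t,a,b) is the side of triangle t joining corner a to corner b,
   traversed from a to b.  The gluing g pairs the sides: it sends each oriented side to the
   oriented side it is identified with (endpoint a is glued to the first endpoint of g(t,a,b)). *)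

definition darts :: "'f set \<Rightarrow> ('f \<times> nat \<times> nat) set" where
  "darts F = {(t, a, b). t \<in> F \<and> a < 3 \<and> b < 3 \<and> a \<noteq> b}"

fun rev_dart :: "'f \<times> nat \<times> nat \<Rightarrow> 'f \<times> nat \<times> nat" where
  "rev_dart (t, a, b) = (t, b, a)"

fun side_of :: "'f \<times> nat \<times> nat \<Rightarrow> 'f \<times> nat set" where
  "side_of (t, a, b) = (t, {a, b})"

definition adjacent :: "'f set \<Rightarrow> ('f \<times> nat \<times> nat \<Rightarrow> 'f \<times> nat \<times> nat) \<Rightarrow> ('f \<times> 'f) set" where
  "adjacent F g = {(t, t'). \<exists>d \<in> darts F. fst d = t \<and> fst (g d) = t'}"

definition ideal_triangulation ::
  "'f set \<Rightarrow> ('f \<times> nat \<times> nat \<Rightarrow> 'f \<times> nat \<times> nat) \<Rightarrow> bool" where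
  "ideal_triangulation F g \<longleftrightarrow>
     finite F \<and> F \<noteq> {} \<and>
     (\<forall>d \<in> darts F. g d \<in> darts F) \<and>
     (\<forall>d \<in> darts F. g (g d) = d) \<and>
     (\<forall>d \<in> darts F. g (rev_dart d) = rev_dart (g d)) \<and>
     (\<forall>d \<in> darts F. side_of (g d) \<noteq> side_of d) \<and>
     (\<forall>t \<in> F. \<forall>t' \<in> F. (t, t') \<in> (adjacent F g)\<^sup>*)"

(* A branching: an orientation of every edge (ori d = True means the edge carrying dart d is
   oriented from the first to the second endpoint of d), well defined on glued sides, such
   that on every triangle it is induced by a total order of the three corners. *)
definition is_branching ::
  "'f set \<Rightarrow> ('f \<times> nat \<times> nat \<Rightarrow> 'f \<times> nat \<times> nat) \<Rightarrow> ('f \<times> nat \<times> nat \<Rightarrow> bool) \<Rightarrow> bool" where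
  "is_branching F g ori \<longleftrightarrow>
     (\<forall>d \<in> darts F. ori (rev_dart d) = (\<not> ori d)) \<and>
     (\<forall>d \<in> darts F. ori (g d) = ori d) \<and>
     (\<forall>t \<in> F. \<exists>r :: nat \<Rightarrow> nat. inj_on r {0, 1, 2} \<and>
        (\<forall>a < 3. \<forall>b < 3. a \<noteq> b \<longrightarrow> (ori (t, a, b) \<longleftrightarrow> r a < r b)))"

end

theory Submission
  imports Defs
begin

text \<open>
  Call an orientation of the darts of a set \<open>G\<close> of triangles a partial branching if it respects
  the gluings between darts of \<open>G\<close> and is induced by an order on each triangle; darts glued to
  triangles outside \<open>G\<close> form the boundary of \<open>G\<close> and are unconstrained. A triangle is acyclic
  unless its three sides are oriented cyclically, so a triangle with a free side can always be
  oriented last.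

  If every triangle of \<open>G\<close> is connected to the boundary, so is every \<open>G - {u}\<close>, and induction
  on \<open>G\<close>, removing the triangle \<open>u\<close> of a boundary dart, shows that \<open>G\<close> has a partial branching
  in which two given boundary darts on different sides agree or disagree as prescribed: the
  induction hypothesis makes the two other sides of \<open>u\<close> disagree, and then the side of the
  boundary dart is free. A closed triangulation is handled by removing one triangle \<open>u\<close> with a
  side glued to another triangle: what remains is connected to the boundary, so the two other
  sides of \<open>u\<close> can again be made to disagree.
\<close>

definition induced_by_order :: "('f \<times> nat \<times> nat \<Rightarrow> bool) \<Rightarrow> 'f \<Rightarrow> bool" where
  "induced_by_order ori t \<longleftrightarrow> (\<exists>r::nat \<Rightarrow> nat. inj_on r {0, 1, 2} \<and>
     (\<forall>a < 3. \<forall>b < 3. a \<noteq> b \<longrightarrow> (ori (t, a, b) \<longleftrightarrow> r a < r b)))"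

definition antisymmetric_at :: "('f \<times> nat \<times> nat \<Rightarrow> bool) \<Rightarrow> 'f \<Rightarrow> bool" where
  "antisymmetric_at ori t \<longleftrightarrow> (\<forall>a < 3. \<forall>b < 3. a \<noteq> b \<longrightarrow> ori (t, b, a) = (\<not> ori (t, a, b)))"

lemma antisymmetric_atD:
  "antisymmetric_at ori t \<Longrightarrow> a < 3 \<Longrightarrow> b < 3 \<Longrightarrow> a \<noteq> b \<Longrightarrow> ori (t, b, a) = (\<not> ori (t, a, b))"
  unfolding antisymmetric_at_def by blast

lemma less_3_cases: "(i::nat) < 3 \<Longrightarrow> i = 0 \<or> i = 1 \<or> i = 2"
  by arith

lemma less_3_corner_cases:
  "a < 3 \<Longrightarrow> b < 3 \<Longrightarrow> c < 3 \<Longrightarrow> distinct [a, b, c] \<Longrightarrow> (i::nat) < 3 \<Longrightarrow> i = a \<or> i = b \<or> i = c"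
  by auto

lemma ex_third_corner:
  assumes "a < 3" "b < 3" "a \<noteq> (b::nat)"
  obtains c where "c < 3" "distinct [a, b, c]"
  using assms by (intro that[of "3 - a - b"]; simp; arith)

lemma induced_by_order_cong:
  "(\<And>a b. f (t, a, b) = h (t, a, b)) \<Longrightarrow> induced_by_order f t = induced_by_order h t"
  by (simp add: induced_by_order_def)

lemma induced_by_order_if_not_cyclic:
  assumes anti: "antisymmetric_at ori t" and abc: "a < 3" "b < 3" "c < 3" "distinct [a, b, c]"
    and not_cyclic: "\<not> (ori (t, a, b) = ori (t, b, c) \<and> ori (t, b, c) = ori (t, c, a))"
  shows "induced_by_order ori t"
proof -
  have rev: "ori (t, 1, 0) = (\<not> ori (t, 0, 1))" "ori (t, 2, 1) = (\<not> ori (t, 1, 2))"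
    "ori (t, 0, 2) = (\<not> ori (t, 2, 0))"
    using antisymmetric_atD[OF anti, of 0 1] antisymmetric_atD[OF anti, of 1 2]
      antisymmetric_atD[OF anti, of 2 0] by simp_all
  \<comment> \<open>every cyclic order of the corners yields the same three values, up to a joint negation\<close>
  have not_cyclic_012: "\<not> (ori (t, 0, 1) = ori (t, 1, 2) \<and> ori (t, 1, 2) = ori (t, 2, 0))"
    using less_3_cases[OF abc(1)] less_3_cases[OF abc(2)] less_3_cases[OF abc(3)] abc(4) not_cyclic
    by (elim disjE) (auto simp del: One_nat_def simp: rev)
  \<comment> \<open>rank each corner by the number of sides pointing into it\<close>
  define r :: "nat \<Rightarrow> nat" where
    "r = (\<lambda>i. if i = 0 then of_bool (\<not> ori (t, 0, 1)) + of_bool (ori (t, 2, 0))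
            else if i = 1 then of_bool (ori (t, 0, 1)) + of_bool (\<not> ori (t, 1, 2))
            else of_bool (\<not> ori (t, 2, 0)) + of_bool (ori (t, 1, 2)))"
  have r: "ori (t, 0, 1) \<longleftrightarrow> r 0 < r 1" "ori (t, 1, 2) \<longleftrightarrow> r 1 < r 2" "ori (t, 2, 0) \<longleftrightarrow> r 2 < r 0"
    and r_inj: "r 0 \<noteq> r 1" "r 1 \<noteq> r 2" "r 0 \<noteq> r 2"
    using not_cyclic_012 unfolding r_def
    by (cases "ori (t, 0, 1)"; cases "ori (t, 1, 2)"; cases "ori (t, 2, 0)"; simp)+
  have "ori (t, p, q) \<longleftrightarrow> r p < r q" if "p < 3" "q < 3" "p \<noteq> q" for p q
    using less_3_cases[OF that(1)] less_3_cases[OF that(2)] that(3) r_inj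
    by (elim disjE) (auto simp del: One_nat_def simp: r rev)
  moreover have "inj_on r {0, 1, 2}"
    using r_inj by (auto simp: inj_on_def)
  ultimately show ?thesis unfolding induced_by_order_def by blast
qed

lemma induced_by_order_neg:
  assumes "induced_by_order ori t"
  shows "induced_by_order (\<lambda>d. \<not> ori d) t"
proof -
  obtain r :: "nat \<Rightarrow> nat" where inj: "inj_on r {0, 1, 2}"
    and r: "\<forall>a < 3. \<forall>b < 3. a \<noteq> b \<longrightarrow> (ori (t, a, b) \<longleftrightarrow> r a < r b)"
    using assms unfolding induced_by_order_def by blast
  define M where "M = r 0 + r 1 + r 2"
  have le_M: "r i \<le> M" if "i < 3" for i
    using less_3_cases[OF that] by (auto simp: M_def)
  have "(\<not> ori (t, a, b)) \<longleftrightarrow> M - r a < M - r b" if "a < 3" "b < 3" "a \<noteq> b" for a b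
  proof -
    have "r a \<noteq> r b"
      using inj that less_3_cases[OF that(1)] less_3_cases[OF that(2)] by (auto simp: inj_on_def)
    then show ?thesis using r that le_M[OF that(1)] le_M[OF that(2)] by auto
  qed
  moreover have "inj_on (\<lambda>i. M - r i) {0, 1, 2}"
    using inj le_M[of 0] le_M[of 1] le_M[of 2] by (auto simp: inj_on_def)
  ultimately show ?thesis unfolding induced_by_order_def by blast
qed

definition cyclic_orientation ::
  "nat \<Rightarrow> nat \<Rightarrow> nat \<Rightarrow> bool \<Rightarrow> bool \<Rightarrow> bool \<Rightarrow> 'f \<times> nat \<times> nat \<Rightarrow> bool" where
  "cyclic_orientation a b c x y z d =
     (if snd d \<in> {(a, b), (b, a)} then x = (snd d = (a, b))
      else if snd d \<in> {(b, c), (c, b)} then y = (snd d = (b, c))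
      else z = (snd d = (c, a)))"

lemma cyclic_orientation_simps:
  assumes "distinct [a, b, c]"
  shows "cyclic_orientation a b c x y z (t, a, b) = x" "cyclic_orientation a b c x y z (t, b, a) = (\<not> x)"
    "cyclic_orientation a b c x y z (t, b, c) = y" "cyclic_orientation a b c x y z (t, c, b) = (\<not> y)"
    "cyclic_orientation a b c x y z (t, c, a) = z" "cyclic_orientation a b c x y z (t, a, c) = (\<not> z)"
  using assms by (auto simp: cyclic_orientation_def)

lemma cyclic_orientation_branched:
  assumes abc: "a < 3" "b < 3" "c < 3" "distinct [a, b, c]" and not_cyclic: "\<not> (x = y \<and> y = z)"
  shows "antisymmetric_at (cyclic_orientation a b c x y z) t"
    and "induced_by_order (cyclic_orientation a b c x y z) t"
proof -
  show anti: "antisymmetric_at (cyclic_orientation a b c x y z) t"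
    unfolding antisymmetric_at_def
  proof (intro allI impI)
    fix p q :: nat
    assume pq: "p < 3" "q < 3" "p \<noteq> q"
    then show "cyclic_orientation a b c x y z (t, q, p) = (\<not> cyclic_orientation a b c x y z (t, p, q))"
      using less_3_corner_cases[OF abc pq(1)] less_3_corner_cases[OF abc pq(2)] abc(4)
      by (elim disjE) (simp_all add: cyclic_orientation_simps[OF abc(4)])
  qed
  show "induced_by_order (cyclic_orientation a b c x y z) t"
    by (rule induced_by_order_if_not_cyclic[OF anti abc])
       (use not_cyclic in \<open>simp add: cyclic_orientation_simps[OF abc(4)]\<close>)
qed

lemma mem_darts [simp]: "(t, a, b) \<in> darts G \<longleftrightarrow> t \<in> G \<and> a < 3 \<and> b < 3 \<and> a \<noteq> b"
  by (simp add: darts_def)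

lemma rev_dart_rev_dart [simp]: "rev_dart (rev_dart d) = d"
  by (cases d) simp

lemma rev_dart_in_darts_iff [simp]: "rev_dart d \<in> darts G \<longleftrightarrow> d \<in> darts G"
  by (cases d) auto

lemma darts_mono: "G \<subseteq> F \<Longrightarrow> darts G \<subseteq> darts F"
  by (auto simp: darts_def)

lemma darts_Diff_singleton: "d \<in> darts (G - {u}) \<longleftrightarrow> d \<in> darts G \<and> fst d \<noteq> u"
  by (cases d) auto

lemma in_darts_iff_fst: "d \<in> darts F \<Longrightarrow> d \<in> darts G \<longleftrightarrow> fst d \<in> G"
  by (cases d) auto

lemma dart_cyclic_or_rev:
  assumes "a < 3" "b < 3" "c < 3" "distinct [a, b, c]" and "(u, p, q) \<in> darts G"
  shows "(u, p, q) \<in> {(u, a, b), (u, b, c), (u, c, a)} \<or> rev_dart (u, p, q) \<in> {(u, a, b), (u, b, c), (u, c, a)}"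
  using assms less_3_corner_cases[OF assms(1-4), of p] less_3_corner_cases[OF assms(1-4), of q]
  by auto

lemma ideal_triangulationD:
  assumes "ideal_triangulation F g"
  shows "finite F" "d \<in> darts F \<Longrightarrow> g d \<in> darts F" "d \<in> darts F \<Longrightarrow> g (g d) = d"
    "d \<in> darts F \<Longrightarrow> g (rev_dart d) = rev_dart (g d)"
    "d \<in> darts F \<Longrightarrow> side_of (g d) \<noteq> side_of d"
    "t \<in> F \<Longrightarrow> t' \<in> F \<Longrightarrow> (t, t') \<in> (adjacent F g)\<^sup>*"
  using assms unfolding ideal_triangulation_def by blast+

lemma glued_rev_eq:
  assumes "ideal_triangulation F g" "d \<in> darts F" "g d = rev_dart e"
  shows "g e = rev_dart d"
proof -
  have "rev_dart e \<in> darts F" using assms ideal_triangulationD(2) by metis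
  then have "g (rev_dart e) = rev_dart (g e)" using assms(1) ideal_triangulationD(4) by simp
  then show ?thesis using assms ideal_triangulationD(3)[OF assms(1,2)] by (metis rev_dart_rev_dart)
qed

section \<open>Partial branchings\<close>

definition partial_branching ::
  "'f set \<Rightarrow> ('f \<times> nat \<times> nat \<Rightarrow> 'f \<times> nat \<times> nat) \<Rightarrow> ('f \<times> nat \<times> nat \<Rightarrow> bool) \<Rightarrow> bool" where
  "partial_branching G g ori \<longleftrightarrow>
     (\<forall>d \<in> darts G. ori (rev_dart d) = (\<not> ori d)) \<and>
     (\<forall>d \<in> darts G. g d \<in> darts G \<longrightarrow> ori (g d) = ori d) \<and>
     (\<forall>t \<in> G. induced_by_order ori t)"

lemma is_branching_if_partial_branching:
  "ideal_triangulation F g \<Longrightarrow> partial_branching F g ori \<Longrightarrow> is_branching F g ori"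
  unfolding is_branching_def partial_branching_def induced_by_order_def ideal_triangulation_def
  by blast

lemma partial_branching_rev:
  "partial_branching G g ori \<Longrightarrow> d \<in> darts G \<Longrightarrow> ori (rev_dart d) = (\<not> ori d)"
  unfolding partial_branching_def by blast

lemma partial_branching_neg:
  assumes "partial_branching G g ori"
  shows "partial_branching G g (\<lambda>d. \<not> ori d)"
  using assms unfolding partial_branching_def by (auto intro: induced_by_order_neg)

lemma ex_partial_branching_value:
  assumes "partial_branching G g ori"
  obtains ori' where "partial_branching G g ori'" "ori' d = v"
proof (cases "ori d = v")
  case True
  then show ?thesis using that assms by blast
next
  case False
  then show ?thesis using that[OF partial_branching_neg[OF assms]] by blast
qed

lemma override_rev:
  assumes ori': "partial_branching (G - {u}) g ori'" and \<tau>: "antisymmetric_at \<tau> u"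
    and d: "d \<in> darts G"
  defines "ori \<equiv> \<lambda>d. if fst d = u then \<tau> d else ori' d"
  shows "ori (rev_dart d) = (\<not> ori d)"
proof -
  obtain t p q where d_eq: "d = (t, p, q)" by (cases d)
  show ?thesis
  proof (cases "t = u")
    case True
    then show ?thesis using antisymmetric_atD[OF \<tau>, of p q] d by (simp add: d_eq ori_def)
  next
    case False
    then have "d \<in> darts (G - {u})" using d by (simp add: d_eq)
    then show ?thesis using partial_branching_rev[OF ori', of d] False by (simp add: d_eq ori_def)
  qed
qed

lemma partial_branching_override:
  fixes \<tau> :: "'f \<times> nat \<times> nat \<Rightarrow> bool"
  assumes IT: "ideal_triangulation F g" and GF: "G \<subseteq> F" and u: "u \<in> G"
    and ori': "partial_branching (G - {u}) g ori'"
    and \<tau>: "antisymmetric_at \<tau> u" "induced_by_order \<tau> u"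
    and abc: "a < 3" "b < 3" "c < 3" "distinct [a, b, c]"
  defines "ori \<equiv> \<lambda>d. if fst d = u then \<tau> d else ori' d"
  assumes glue: "\<And>d. d \<in> {(u, a, b), (u, b, c), (u, c, a)} \<Longrightarrow> g d \<in> darts G \<Longrightarrow> ori (g d) = ori d"
  shows "partial_branching G g ori"
proof -
  have rev: "ori (rev_dart d) = (\<not> ori d)" if "d \<in> darts G" for d
    using override_rev[OF ori' \<tau>(1) that] unfolding ori_def .
  have glue_at_u: "ori (g d) = ori d" if d: "d \<in> darts G" "fst d = u" "g d \<in> darts G" for d
  proof -
    obtain p q where d_eq: "d = (u, p, q)" using d(2) by (cases d) auto
    have d_F: "d \<in> darts F" using d(1) darts_mono[OF GF] by blast
    show ?thesis
    proof (cases "d \<in> {(u, a, b), (u, b, c), (u, c, a)}")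
      case True
      then show ?thesis using glue d(3) by blast
    next
      case False
      then have cyc: "rev_dart d \<in> {(u, a, b), (u, b, c), (u, c, a)}"
        using dart_cyclic_or_rev[OF abc, of u p q G] d(1) by (auto simp: d_eq)
      have g_rev: "g (rev_dart d) = rev_dart (g d)" using ideal_triangulationD(4)[OF IT d_F] .
      have "ori (g (rev_dart d)) = ori (rev_dart d)" using glue[OF cyc] d(3) g_rev by simp
      then show ?thesis using rev[OF d(1)] rev[OF d(3)] g_rev by simp
    qed
  qed
  show ?thesis
    unfolding partial_branching_def
  proof (intro conjI ballI impI)
    show "ori (rev_dart d) = (\<not> ori d)" if "d \<in> darts G" for d using rev that .
  next
    fix d assume d: "d \<in> darts G" and gd: "g d \<in> darts G"
    have d_F: "d \<in> darts F" using d darts_mono[OF GF] by blast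
    show "ori (g d) = ori d"
    proof (cases "fst d = u \<or> fst (g d) = u")
      case True
      then show ?thesis
      proof
        assume "fst d = u"
        then show ?thesis using glue_at_u d gd by blast
      next
        assume "fst (g d) = u"
        then show ?thesis using glue_at_u[OF gd] d ideal_triangulationD(3)[OF IT d_F] by simp
      qed
    next
      case False
      then have "d \<in> darts (G - {u})" "g d \<in> darts (G - {u})"
        using d gd by (simp_all add: darts_Diff_singleton)
      then show ?thesis using ori' False unfolding partial_branching_def ori_def by auto
    qed
  next
    fix t assume t: "t \<in> G"
    show "induced_by_order ori t"
    proof (cases "t = u")
      case True
      then show ?thesis using \<tau>(2) induced_by_order_cong[of ori t \<tau>] by (simp add: ori_def)
    next
      case False
      then have "induced_by_order ori' t" using ori' t unfolding partial_branching_def by blast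
      then show ?thesis using False induced_by_order_cong[of ori t ori'] by (simp add: ori_def)
    qed
  qed
qed

lemma glued_within_triangle:
  assumes IT: "ideal_triangulation F g" and u: "u \<in> F"
    and abc: "a < 3" "b < 3" "c < 3" "distinct [a, b, c]"
    and ab: "fst (g (u, a, b)) \<noteq> u" and bc: "fst (g (u, b, c)) = u"
  shows "g (u, b, c) = (u, c, a) \<or> g (u, b, c) = (u, a, c)"
proof -
  have dF: "(u, b, c) \<in> darts F" "(u, a, b) \<in> darts F" using u abc by auto
  obtain p q where e: "g (u, b, c) = (u, p, q)" using bc by (cases "g (u, b, c)") auto
  have pq: "p < 3" "q < 3" "p \<noteq> q" using ideal_triangulationD(2)[OF IT dF(1)] e by auto
  have "{p, q} \<noteq> {b, c}" using ideal_triangulationD(5)[OF IT dF(1)] e by simp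
  moreover have "(p, q) \<noteq> (a, b)"
  proof
    assume "(p, q) = (a, b)"
    then have "g (u, a, b) = (u, b, c)" using e ideal_triangulationD(3)[OF IT dF(1)] by simp
    then show False using ab by simp
  qed
  moreover have "(p, q) \<noteq> (b, a)"
  proof
    assume "(p, q) = (b, a)"
    then have "g (u, a, b) = rev_dart (u, b, c)" using glued_rev_eq[OF IT dF(1), of "(u, a, b)"] e by simp
    then show False using ab by simp
  qed
  ultimately show ?thesis
    using less_3_corner_cases[OF abc pq(1)] less_3_corner_cases[OF abc pq(2)] pq(3) abc(4) e
    by (auto simp: doubleton_eq_iff)
qed

lemma glued_sides_cases:
  assumes IT: "ideal_triangulation F g" and u: "u \<in> F"
    and abc: "a < 3" "b < 3" "c < 3" "distinct [a, b, c]"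
    and ab: "fst (g (u, a, b)) \<noteq> u"
  obtains (separate) "fst (g (u, b, c)) \<noteq> u" "fst (g (u, c, a)) \<noteq> u"
    | (cyclic) "g (u, b, c) = (u, c, a)" "g (u, c, a) = (u, b, c)"
    | (reversed) "g (u, b, c) = (u, a, c)" "g (u, c, a) = (u, c, b)"
proof -
  have dF: "(u, b, c) \<in> darts F" "(u, c, a) \<in> darts F" using u abc by auto
  show ?thesis
  proof (cases "fst (g (u, b, c)) = u")
    case True
    then consider "g (u, b, c) = (u, c, a)" | "g (u, b, c) = rev_dart (u, c, a)"
      using glued_within_triangle[OF IT u abc ab] by auto
    then show ?thesis
    proof cases
      case 1
      then show ?thesis using cyclic ideal_triangulationD(3)[OF IT dF(1)] by simp
    next
      case 2
      then show ?thesis using reversed glued_rev_eq[OF IT dF(1) 2] by simp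
    qed
  next
    case False
    have "fst (g (u, c, a)) \<noteq> u"
    proof
      assume "fst (g (u, c, a)) = u"
      then consider "g (u, c, a) = (u, a, b)" | "g (u, c, a) = rev_dart (u, a, b)"
        using glued_within_triangle[OF IT u abc(2,3,1) _ False] abc(4) by auto
      then show False
      proof cases
        case 1
        then show False using ab ideal_triangulationD(3)[OF IT dF(2)] by (metis fst_conv)
      next
        case 2
        then show False using ab glued_rev_eq[OF IT dF(2) 2] by simp
      qed
    qed
    then show ?thesis using separate False by blast
  qed
qed

lemma partial_branching_extend:
  assumes IT: "ideal_triangulation F g" and GF: "G \<subseteq> F" and u: "u \<in> G"
    and ori': "partial_branching (G - {u}) g ori'"
    and abc: "a < 3" "b < 3" "c < 3" "distinct [a, b, c]"
    and ab: "fst (g (u, a, b)) \<noteq> u"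
    and v: "g (u, a, b) \<in> darts G \<Longrightarrow> ori' (g (u, a, b)) = v"
    and not_cyclic: "g (u, c, a) \<in> darts (G - {u}) \<Longrightarrow>
      \<not> ((if g (u, b, c) \<in> darts (G - {u}) then ori' (g (u, b, c)) else w) = v \<and> ori' (g (u, c, a)) = v)"
  obtains ori where "partial_branching G g ori" "ori (u, a, b) = v"
    "g (u, b, c) \<notin> darts G \<Longrightarrow> ori (u, b, c) = w" "\<And>d. fst d \<noteq> u \<Longrightarrow> ori d = ori' d"
proof -
  have uF: "u \<in> F" using u GF by blast
  define ext where "ext x y z = (\<lambda>d. if fst d = u then cyclic_orientation a b c x y z d else ori' d)"
    for x y z
  have extend: "partial_branching G g (ext x y z)"
    if "\<not> (x = y \<and> y = z)"
      and "\<And>d. d \<in> {(u, a, b), (u, b, c), (u, c, a)} \<Longrightarrow> g d \<in> darts G \<Longrightarrow> ext x y z (g d) = ext x y z d"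
    for x y z
    using partial_branching_override[OF IT GF u ori' cyclic_orientation_branched[OF abc that(1)] abc]
      that(2) unfolding ext_def by blast
  have ext_u: "ext x y z (u, a, b) = x" "ext x y z (u, b, c) = y" "ext x y z (u, c, a) = z"
    "ext x y z (u, a, c) = (\<not> z)" "ext x y z (u, c, b) = (\<not> y)" for x y z
    by (simp_all add: ext_def cyclic_orientation_simps[OF abc(4)])
  have ext_off: "fst d \<noteq> u \<Longrightarrow> ext x y z d = ori' d" for x y z d
    by (simp add: ext_def)
  have glued_off: "ext x y z (g d) = ori' (g d) \<and> g d \<in> darts (G - {u})"
    if "fst (g d) \<noteq> u" "g d \<in> darts G" for x y z d
    using that by (simp add: ext_off darts_Diff_singleton)
  have glue_ab: "g (u, a, b) \<in> darts G \<Longrightarrow> ext v y z (g (u, a, b)) = ext v y z (u, a, b)" for y z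
    using ab v by (simp add: ext_off ext_u)
  show ?thesis
  proof (cases rule: glued_sides_cases[OF IT uF abc ab, case_names separate cyclic reversed])
    case separate
    define y where "y = (if g (u, b, c) \<in> darts (G - {u}) then ori' (g (u, b, c)) else w)"
    define z where "z = (if g (u, c, a) \<in> darts (G - {u}) then ori' (g (u, c, a)) else \<not> v)"
    have "partial_branching G g (ext v y z)"
    proof (rule extend)
      show "\<not> (v = y \<and> y = z)"
        using not_cyclic unfolding y_def z_def by (cases "g (u, c, a) \<in> darts (G - {u})") auto
    next
      fix d assume "d \<in> {(u, a, b), (u, b, c), (u, c, a)}" "g d \<in> darts G"
      then show "ext v y z (g d) = ext v y z d"
        using glue_ab glued_off separate by (auto simp: ext_u y_def z_def)
    qed
    moreover have "g (u, b, c) \<notin> darts G \<Longrightarrow> y = w" by (simp add: y_def darts_Diff_singleton)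
    ultimately show ?thesis using that[of "ext v y z"] ext_u ext_off by simp
  next
    case cyclic
    have "partial_branching G g (ext v (\<not> v) (\<not> v))"
      by (rule extend) (use glue_ab cyclic in \<open>auto simp: ext_u\<close>)
    then show ?thesis using that[of "ext v (\<not> v) (\<not> v)"] ext_u ext_off cyclic u abc by simp
  next
    case reversed
    have "partial_branching G g (ext v (\<not> v) v)"
      by (rule extend) (use glue_ab reversed in \<open>auto simp: ext_u\<close>)
    then show ?thesis using that[of "ext v (\<not> v) v"] ext_u ext_off reversed u abc by simp
  qed
qed

lemma partial_branching_extend_separated:
  assumes IT: "ideal_triangulation F g" and GF: "G \<subseteq> F" and u: "u \<in> G"
    and ori': "partial_branching (G - {u}) g ori'"
    and abc: "a < 3" "b < 3" "c < 3" "distinct [a, b, c]"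
    and ab: "fst (g (u, a, b)) \<noteq> u"
    and v: "g (u, a, b) \<in> darts G \<Longrightarrow> ori' (g (u, a, b)) = v"
    and separated: "g (u, b, c) \<in> darts (G - {u}) \<Longrightarrow> g (u, c, a) \<in> darts (G - {u}) \<Longrightarrow>
      ori' (g (u, b, c)) \<noteq> ori' (g (u, c, a))"
  obtains ori where "partial_branching G g ori" "ori (u, a, b) = v" "\<And>d. fst d \<noteq> u \<Longrightarrow> ori d = ori' d"
proof -
  have "g (u, c, a) \<in> darts (G - {u}) \<Longrightarrow>
      \<not> ((if g (u, b, c) \<in> darts (G - {u}) then ori' (g (u, b, c)) else \<not> v) = v \<and> ori' (g (u, c, a)) = v)"
    using separated by auto
  from partial_branching_extend[OF IT GF u ori' abc ab v this] that show ?thesis by blast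
qed

section \<open>Sets of triangles connected to the boundary\<close>

definition has_boundary_dart :: "'f set \<Rightarrow> ('f \<times> nat \<times> nat \<Rightarrow> 'f \<times> nat \<times> nat) \<Rightarrow> 'f \<Rightarrow> bool" where
  "has_boundary_dart G g t \<longleftrightarrow> (\<exists>d \<in> darts G. fst d = t \<and> g d \<notin> darts G)"

definition reaches_boundary :: "'f set \<Rightarrow> ('f \<times> nat \<times> nat \<Rightarrow> 'f \<times> nat \<times> nat) \<Rightarrow> bool" where
  "reaches_boundary G g \<longleftrightarrow>
     (\<forall>t \<in> G. \<exists>w. (t, w) \<in> (Restr (adjacent G g) G)\<^sup>* \<and> has_boundary_dart G g w)"

lemma reaches_boundary_ex_boundary_dart:
  assumes "reaches_boundary G g" "G \<noteq> {}"
  obtains d where "d \<in> darts G" "g d \<notin> darts G"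
  using assms unfolding reaches_boundary_def has_boundary_dart_def by blast

text \<open>A path in \<open>G\<close> ending at \<open>u\<close> or at the boundary either avoids \<open>u\<close>, or the triangle
  visited just before \<open>u\<close> has a dart glued to \<open>u\<close>, which is a boundary dart of \<open>G - {u}\<close>.\<close>

lemma rtrancl_adjacent_Diff_singleton:
  assumes "(t, w) \<in> (Restr (adjacent G g) G)\<^sup>*"
    and "t \<in> G" "t \<noteq> u" "w = u \<or> has_boundary_dart G g w"
  shows "\<exists>w'. (t, w') \<in> (Restr (adjacent (G - {u}) g) (G - {u}))\<^sup>* \<and> has_boundary_dart (G - {u}) g w'"
  using assms
proof (induction rule: converse_rtrancl_induct)
  case base
  then obtain d where d: "d \<in> darts G" "fst d = w" "g d \<notin> darts G"
    unfolding has_boundary_dart_def by blast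
  then have "has_boundary_dart (G - {u}) g w"
    unfolding has_boundary_dart_def using base.prems(2)
    by (intro bexI[of _ d]) (auto simp: darts_Diff_singleton)
  then show ?case by blast
next
  case (step y z)
  from step.hyps(1) obtain d where d: "d \<in> darts G" "fst d = y" "fst (g d) = z" "y \<in> G" "z \<in> G"
    unfolding adjacent_def by auto
  show ?case
  proof (cases "z = u")
    case True
    have "has_boundary_dart (G - {u}) g y"
      unfolding has_boundary_dart_def using d True step.prems(2)
      by (intro bexI[of _ d]) (auto simp: darts_Diff_singleton)
    then show ?thesis by blast
  next
    case False
    obtain w' where w': "(z, w') \<in> (Restr (adjacent (G - {u}) g) (G - {u}))\<^sup>*"
      "has_boundary_dart (G - {u}) g w'"
      using step.IH[OF d(5) False step.prems(3)] by blast
    have "(y, z) \<in> Restr (adjacent (G - {u}) g) (G - {u})"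
      using d False step.prems(2) unfolding adjacent_def by (auto simp: darts_Diff_singleton)
    then show ?thesis using w' by (meson converse_rtrancl_into_rtrancl)
  qed
qed

lemma reaches_boundary_Diff_singleton:
  assumes "reaches_boundary G g"
  shows "reaches_boundary (G - {u}) g"
  unfolding reaches_boundary_def
proof
  fix t assume t: "t \<in> G - {u}"
  then obtain w where w: "(t, w) \<in> (Restr (adjacent G g) G)\<^sup>*" "has_boundary_dart G g w"
    using assms unfolding reaches_boundary_def by blast
  show "\<exists>w. (t, w) \<in> (Restr (adjacent (G - {u}) g) (G - {u}))\<^sup>* \<and> has_boundary_dart (G - {u}) g w"
    by (rule rtrancl_adjacent_Diff_singleton[OF w(1)]) (use t w(2) in auto)
qed

lemma reaches_boundary_remove_triangle:
  assumes IT: "ideal_triangulation F g" and u: "u \<in> F"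
  shows "reaches_boundary (F - {u}) g"
  unfolding reaches_boundary_def
proof
  fix t assume t: "t \<in> F - {u}"
  have "adjacent F g \<subseteq> F \<times> F"
  proof
    fix x assume "x \<in> adjacent F g"
    then obtain d where d: "d \<in> darts F" "x = (fst d, fst (g d))" unfolding adjacent_def by auto
    have "g d \<in> darts F" using ideal_triangulationD(2)[OF IT d(1)] .
    then show "x \<in> F \<times> F" using d by (cases d; cases "g d") auto
  qed
  then have "Restr (adjacent F g) F = adjacent F g" by blast
  then have "(t, u) \<in> (Restr (adjacent F g) F)\<^sup>*" using ideal_triangulationD(6)[OF IT] t u by simp
  then show "\<exists>w. (t, w) \<in> (Restr (adjacent (F - {u}) g) (F - {u}))\<^sup>* \<and> has_boundary_dart (F - {u}) g w"
    by (rule rtrancl_adjacent_Diff_singleton) (use t in auto)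
qed

lemma boundary_dart_glued_elsewhere:
  assumes "ideal_triangulation F g" "G \<subseteq> F" "d \<in> darts G" "g d \<notin> darts G"
  shows "fst (g d) \<noteq> fst d"
proof -
  have dF: "d \<in> darts F" using assms(2,3) darts_mono by blast
  then have "g d \<in> darts F" using ideal_triangulationD(2)[OF assms(1)] by blast
  then show ?thesis using assms(3,4) in_darts_iff_fst[OF dF, of G] in_darts_iff_fst[of "g d" F G] by auto
qed

lemma ex_partial_branching:
  assumes IT: "ideal_triangulation F g" and "G \<subseteq> F" "reaches_boundary G g"
  shows "\<exists>ori. partial_branching G g ori"
  using assms(2,3)
proof (induction "card G" arbitrary: G rule: less_induct)
  case less
  show ?case
  proof (cases "G = {}")
    case True
    then show ?thesis by (intro exI[of _ "\<lambda>_. True"]) (simp add: partial_branching_def darts_def)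
  next
    case False
    then obtain d where d: "d \<in> darts G" "g d \<notin> darts G"
      using reaches_boundary_ex_boundary_dart less.prems(2) by blast
    then obtain u a b where d_eq: "d = (u, a, b)" and abu: "u \<in> G" "a < 3" "b < 3" "a \<noteq> b"
      by (cases d) auto
    obtain c where abc: "a < 3" "b < 3" "c < 3" "distinct [a, b, c]"
      using ex_third_corner abu(2-4) by metis
    have fin: "finite G" using finite_subset[OF less.prems(1) ideal_triangulationD(1)[OF IT]] .
    obtain ori' where ori': "partial_branching (G - {u}) g ori'"
      using less.hyps[of "G - {u}"] less.prems reaches_boundary_Diff_singleton abu(1) fin
      by (meson card_Diff1_less Diff_subset subset_trans)
    have ab: "fst (g (u, a, b)) \<noteq> u"
      using boundary_dart_glued_elsewhere[OF IT less.prems(1) d] by (simp add: d_eq)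
    \<comment> \<open>the boundary side \<open>(a, b)\<close> is oriented against the side \<open>(b, c)\<close>\<close>
    obtain ori where "partial_branching G g ori"
      by (rule partial_branching_extend[OF IT less.prems(1) abu(1) ori' abc ab,
            where v = "\<not> ori' (g (u, b, c))" and w = "ori' (g (u, b, c))"])
         (use d d_eq in auto)
    then show ?thesis by blast
  qed
qed

lemma ex_partial_branching_cyclic_relation:
  assumes IT: "ideal_triangulation F g" and GF: "G \<subseteq> F" and RB: "reaches_boundary G g"
    and u: "u \<in> G" and abc: "a < 3" "b < 3" "c < 3" "distinct [a, b, c]"
    and bd: "g (u, a, b) \<notin> darts G" "g (u, b, c) \<notin> darts G"
  shows "\<exists>ori. partial_branching G g ori \<and> (ori (u, a, b) = ori (u, b, c)) = r"
proof -
  obtain ori0 where "partial_branching (G - {u}) g ori0"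
    using ex_partial_branching[OF IT _ reaches_boundary_Diff_singleton[OF RB]] GF by blast
  then obtain ori' where ori': "partial_branching (G - {u}) g ori'" "ori' (g (u, c, a)) = False"
    by (rule ex_partial_branching_value)
  have ab: "fst (g (u, a, b)) \<noteq> u"
    using boundary_dart_glued_elsewhere[OF IT GF _ bd(1)] u abc by simp
  obtain ori where "partial_branching G g ori" "ori (u, a, b) = True" "ori (u, b, c) = r"
    by (rule partial_branching_extend[OF IT GF u ori'(1) abc ab, where v = True and w = r])
       (use bd ori'(2) in \<open>auto simp: darts_Diff_singleton\<close>)
  then show ?thesis by auto
qed

lemma ex_shared_corner:
  fixes p q p' q' :: nat
  assumes pq: "p < 3" "q < 3" "p \<noteq> q" and pq': "p' < 3" "q' < 3" "p' \<noteq> q'"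
    and sides: "{p, q} \<noteq> {p', q'}"
  obtains a b c where "a < 3" "b < 3" "c < 3" "distinct [a, b, c]"
    "(p, q) \<in> {(a, b), (b, a)}" "(p', q') \<in> {(b, c), (c, b)}"
proof -
  have shared: "p \<in> {p', q'} \<or> q \<in> {p', q'}"
    using pq pq' by simp arith
  show ?thesis
  proof (cases "p \<in> {p', q'}")
    case True
    define c where "c = (if p = p' then q' else p')"
    show ?thesis
      by (rule that[of q p c]) (use assms True in \<open>auto simp: c_def\<close>)
  next
    case False
    define c where "c = (if q = p' then q' else p')"
    show ?thesis
      by (rule that[of p q c]) (use assms False shared in \<open>auto simp: c_def\<close>)
  qed
qed

lemma boundary_dart_rev:
  assumes IT: "ideal_triangulation F g" and "G \<subseteq> F" "d \<in> darts G" "g d \<notin> darts G"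
  shows "g (rev_dart d) \<notin> darts G"
  using assms darts_mono ideal_triangulationD(4)[OF IT, of d] by fastforce

lemma ex_partial_branching_relation_same_triangle:
  assumes IT: "ideal_triangulation F g" and GF: "G \<subseteq> F" and RB: "reaches_boundary G g"
    and d: "(u, p, q) \<in> darts G" "(u, p', q') \<in> darts G"
    and bd: "g (u, p, q) \<notin> darts G" "g (u, p', q') \<notin> darts G"
    and sides: "side_of (u, p, q) \<noteq> side_of (u, p', q')"
  shows "\<exists>ori. partial_branching G g ori \<and> (ori (u, p, q) = ori (u, p', q')) = r"
proof -
  obtain a b c where abc: "a < 3" "b < 3" "c < 3" "distinct [a, b, c]"
    and pq: "(p, q) \<in> {(a, b), (b, a)}" "(p', q') \<in> {(b, c), (c, b)}"
    by (rule ex_shared_corner[of p q p' q']) (use d sides in auto)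
  have u: "u \<in> G" using d(1) by simp
  have bd_abc: "g (u, a, b) \<notin> darts G" "g (u, b, c) \<notin> darts G"
    using pq bd d boundary_dart_rev[OF IT GF d(1) bd(1)] boundary_dart_rev[OF IT GF d(2) bd(2)] by auto
  define s where "s = (((p, q) = (a, b)) = ((p', q') = (b, c)))"
  obtain ori where ori: "partial_branching G g ori" "(ori (u, a, b) = ori (u, b, c)) = (r = s)"
    using ex_partial_branching_cyclic_relation[OF IT GF RB u abc bd_abc] by blast
  have "ori (u, p, q) = (ori (u, a, b) = ((p, q) = (a, b)))"
    using pq(1) abc partial_branching_rev[OF ori(1), of "(u, a, b)"] u by auto
  moreover have "ori (u, p', q') = (ori (u, b, c) = ((p', q') = (b, c)))"
    using pq(2) abc partial_branching_rev[OF ori(1), of "(u, b, c)"] u by auto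
  ultimately show ?thesis using ori unfolding s_def by auto
qed

lemma glued_sides_differ:
  assumes IT: "ideal_triangulation F g" and u: "u \<in> F"
    and abc: "a < 3" "b < 3" "c < 3" "distinct [a, b, c]"
  shows "side_of (g (u, b, c)) \<noteq> side_of (g (u, c, a))"
proof
  assume h: "side_of (g (u, b, c)) = side_of (g (u, c, a))"
  have dF: "(u, b, c) \<in> darts F" "(u, c, a) \<in> darts F" "(u, c, b) \<in> darts F" using abc u by auto
  have "g (u, c, a) = g (u, b, c) \<or> g (u, c, a) = rev_dart (g (u, b, c))"
    using h ideal_triangulationD(2)[OF IT dF(1)] ideal_triangulationD(2)[OF IT dF(2)]
    by (cases "g (u, b, c)"; cases "g (u, c, a)") (auto simp: doubleton_eq_iff)
  then show False
  proof
    assume "g (u, c, a) = g (u, b, c)"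
    then have "(u, c, a) = (u, b, c)"
      using ideal_triangulationD(3)[OF IT dF(1)] ideal_triangulationD(3)[OF IT dF(2)] by metis
    then show False using abc by simp
  next
    assume "g (u, c, a) = rev_dart (g (u, b, c))"
    then have "g (u, c, a) = g (u, c, b)" using ideal_triangulationD(4)[OF IT dF(1)] by simp
    then have "(u, c, a) = (u, c, b)"
      using ideal_triangulationD(3)[OF IT dF(2)] ideal_triangulationD(3)[OF IT dF(3)] by metis
    then show False using abc by simp
  qed
qed

lemma ex_partial_branching_separating:
  assumes IT: "ideal_triangulation F g" and GF: "G \<subseteq> F" and u: "u \<in> G"
    and abc: "a < 3" "b < 3" "c < 3" "distinct [a, b, c]"
    and ex: "\<exists>ori. partial_branching (G - {u}) g ori"
    and rel: "\<And>d1 d2. d1 \<in> darts (G - {u}) \<Longrightarrow> d2 \<in> darts (G - {u}) \<Longrightarrow>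
      g d1 \<notin> darts (G - {u}) \<Longrightarrow> g d2 \<notin> darts (G - {u}) \<Longrightarrow> side_of d1 \<noteq> side_of d2 \<Longrightarrow>
      \<exists>ori. partial_branching (G - {u}) g ori \<and> (ori d1 = ori d2) = False"
  obtains ori' where "partial_branching (G - {u}) g ori'"
    "g (u, b, c) \<in> darts (G - {u}) \<Longrightarrow> g (u, c, a) \<in> darts (G - {u}) \<Longrightarrow>
      ori' (g (u, b, c)) \<noteq> ori' (g (u, c, a))"
proof (cases "g (u, b, c) \<in> darts (G - {u}) \<and> g (u, c, a) \<in> darts (G - {u})")
  case True
  have uF: "u \<in> F" using u GF by blast
  have "g (g (u, b, c)) \<notin> darts (G - {u})" "g (g (u, c, a)) \<notin> darts (G - {u})"
    using abc uF ideal_triangulationD(3)[OF IT] by (simp_all add: darts_Diff_singleton)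
  then obtain ori' where "partial_branching (G - {u}) g ori'" "ori' (g (u, b, c)) \<noteq> ori' (g (u, c, a))"
    using rel True glued_sides_differ[OF IT uF abc] by blast
  then show ?thesis using that by blast
next
  case False
  then show ?thesis using ex that by blast
qed

lemma ex_partial_branching_relation:
  assumes IT: "ideal_triangulation F g"
    and "G \<subseteq> F" "reaches_boundary G g" "d1 \<in> darts G" "d2 \<in> darts G"
    and "g d1 \<notin> darts G" "g d2 \<notin> darts G" "side_of d1 \<noteq> side_of d2"
  shows "\<exists>ori. partial_branching G g ori \<and> (ori d1 = ori d2) = r"
  using assms(2-)
proof (induction "card G" arbitrary: G d1 d2 r rule: less_induct)
  case less
  note GF = less.prems(1) and RB = less.prems(2) and d = less.prems(3,4)
    and bd = less.prems(5,6) and sides = less.prems(7)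
  obtain u a b where d1_eq: "d1 = (u, a, b)" and abu: "u \<in> G" "a < 3" "b < 3" "a \<noteq> b"
    using d(1) by (cases d1) auto
  show ?case
  proof (cases "fst d2 = u")
    case True
    then obtain p' q' where "d2 = (u, p', q')" by (cases d2) auto
    then show ?thesis
      using ex_partial_branching_relation_same_triangle[OF IT GF RB] d bd sides d1_eq by simp
  next
    case False
    obtain c where abc: "a < 3" "b < 3" "c < 3" "distinct [a, b, c]"
      using ex_third_corner abu(2-4) by metis
    have GF': "G - {u} \<subseteq> F" and RB': "reaches_boundary (G - {u}) g"
      using GF reaches_boundary_Diff_singleton[OF RB] by auto
    have smaller: "card (G - {u}) < card G"
      using card_Diff1_less[OF finite_subset[OF GF ideal_triangulationD(1)[OF IT]] abu(1)] .
    obtain ori' where ori': "partial_branching (G - {u}) g ori'"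
      and separated: "g (u, b, c) \<in> darts (G - {u}) \<Longrightarrow> g (u, c, a) \<in> darts (G - {u}) \<Longrightarrow>
        ori' (g (u, b, c)) \<noteq> ori' (g (u, c, a))"
      using ex_partial_branching_separating[OF IT GF abu(1) abc ex_partial_branching[OF IT GF' RB']
          less.hyps[OF smaller GF' RB']] by blast
    have ab: "fst (g (u, a, b)) \<noteq> u"
      using boundary_dart_glued_elsewhere[OF IT GF d(1) bd(1)] by (simp add: d1_eq)
    obtain ori where ori: "partial_branching G g ori" "ori (u, a, b) = (ori' d2 = r)"
      "\<And>d. fst d \<noteq> u \<Longrightarrow> ori d = ori' d"
      by (rule partial_branching_extend_separated[OF IT GF abu(1) ori' abc ab _ separated,
            where v = "ori' d2 = r"]) (use bd(1) d1_eq in auto)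
    have "ori d2 = ori' d2" using ori(3) False .
    then show ?thesis using ori(1,2) d1_eq by (intro exI[of _ ori]) auto
  qed
qed

lemma ex_side_glued_elsewhere:
  assumes IT: "ideal_triangulation F g" and u: "u \<in> F"
  shows "\<exists>a b. a < 3 \<and> b < 3 \<and> a \<noteq> b \<and> fst (g (u, a, b)) \<noteq> u"
proof (rule ccontr)
  assume "\<not> ?thesis"
  then have within: "\<And>a b. a < 3 \<Longrightarrow> b < 3 \<Longrightarrow> a \<noteq> b \<Longrightarrow> fst (g (u, a, b)) = u"
    by blast
  have partner: "\<exists>p q. g (u, a, b) = (u, p, q) \<and> g (u, p, q) = (u, a, b) \<and> g (u, b, a) = (u, q, p) \<and>
      g (u, q, p) = (u, b, a) \<and> p < 3 \<and> q < 3 \<and> p \<noteq> q \<and> {p, q} \<noteq> {a, b}"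
    if ab: "a < 3" "b < 3" "a \<noteq> b" for a b
  proof -
    have d: "(u, a, b) \<in> darts F" "(u, b, a) \<in> darts F" using ab u by auto
    obtain p q where e: "g (u, a, b) = (u, p, q)"
      using within[OF ab] by (cases "g (u, a, b)") auto
    have ba: "g (u, b, a) = (u, q, p)" using ideal_triangulationD(4)[OF IT d(1)] e by simp
    have "p < 3" "q < 3" "p \<noteq> q" using ideal_triangulationD(2)[OF IT d(1)] e by simp_all
    moreover have "g (u, p, q) = (u, a, b)" using ideal_triangulationD(3)[OF IT d(1)] e by simp
    moreover have "g (u, q, p) = (u, b, a)" using ideal_triangulationD(3)[OF IT d(2)] ba by simp
    moreover have "{p, q} \<noteq> {a, b}" using ideal_triangulationD(5)[OF IT d(1)] e by simp
    ultimately show ?thesis using e ba by blast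
  qed
  have n: "(0::nat) < 3" "(1::nat) < 3" "(2::nat) < 3" "(0::nat) \<noteq> 1" "(1::nat) \<noteq> 2" "(2::nat) \<noteq> 0"
    by simp_all
  obtain p1 q1 where 1: "g (u, 0, 1) = (u, p1, q1)" "g (u, p1, q1) = (u, 0, 1)" "g (u, 1, 0) = (u, q1, p1)"
    "g (u, q1, p1) = (u, 1, 0)" "p1 < 3" "q1 < 3" "p1 \<noteq> q1" "{p1, q1} \<noteq> {0, 1}"
    using partner[OF n(1,2,4)] by (elim exE conjE) (rule that; assumption)
  obtain p2 q2 where 2: "g (u, 1, 2) = (u, p2, q2)" "g (u, p2, q2) = (u, 1, 2)" "g (u, 2, 1) = (u, q2, p2)"
    "g (u, q2, p2) = (u, 2, 1)" "p2 < 3" "q2 < 3" "p2 \<noteq> q2" "{p2, q2} \<noteq> {1, 2}"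
    using partner[OF n(2,3,5)] by (elim exE conjE) (rule that; assumption)
  obtain p3 q3 where 3: "g (u, 2, 0) = (u, p3, q3)" "g (u, p3, q3) = (u, 2, 0)" "g (u, 0, 2) = (u, q3, p3)"
    "g (u, q3, p3) = (u, 0, 2)" "p3 < 3" "q3 < 3" "p3 \<noteq> q3" "{p3, q3} \<noteq> {2, 0}"
    using partner[OF n(3,1,6)] by (elim exE conjE) (rule that; assumption)
  have "(p1, q1) \<in> {(1, 2), (2, 1), (2, 0), (0, 2)}"
    using 1(5-8) less_3_cases[of p1] less_3_cases[of q1] by auto
  moreover have "(p2, q2) \<in> {(0, 1), (1, 0), (2, 0), (0, 2)}"
    using 2(5-8) less_3_cases[of p2] less_3_cases[of q2] by auto
  moreover have "(p3, q3) \<in> {(1, 2), (2, 1), (0, 1), (1, 0)}"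
    using 3(5-8) less_3_cases[of p3] less_3_cases[of q3] by auto
  ultimately show False using 1(1-4) 2(1-4) 3(1-4) by auto
qed

theorem lemma2p9:
  fixes F :: "'f set" and g :: "'f \<times> nat \<times> nat \<Rightarrow> 'f \<times> nat \<times> nat"
  assumes "ideal_triangulation F g"
  shows "\<exists>ori. is_branching F g ori"
proof -
  note IT = assms
  obtain u where u: "u \<in> F" using IT unfolding ideal_triangulation_def by blast
  obtain a b where ab: "a < 3" "b < 3" "a \<noteq> b" "fst (g (u, a, b)) \<noteq> u"
    using ex_side_glued_elsewhere[OF IT u] by blast
  obtain c where abc: "a < 3" "b < 3" "c < 3" "distinct [a, b, c]"
    using ex_third_corner ab(1-3) by metis
  have RB: "reaches_boundary (F - {u}) g" using reaches_boundary_remove_triangle[OF IT u] .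
  have F': "F - {u} \<subseteq> F" by blast
  obtain ori' where ori': "partial_branching (F - {u}) g ori'"
    and separated: "g (u, b, c) \<in> darts (F - {u}) \<Longrightarrow> g (u, c, a) \<in> darts (F - {u}) \<Longrightarrow>
      ori' (g (u, b, c)) \<noteq> ori' (g (u, c, a))"
    using ex_partial_branching_separating[OF IT order_refl u abc ex_partial_branching[OF IT F' RB]
        ex_partial_branching_relation[OF IT F' RB]] by blast
  obtain ori where "partial_branching F g ori"
    by (rule partial_branching_extend_separated[OF IT order_refl u ori' abc ab(4) refl separated])
  then show ?thesis using is_branching_if_partial_branching[OF IT] by blast
qed

end
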